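(* Let $A$ be a ${}^\lambda\mathrm{H}_t(m,n;s,k)$ which is simple with respect to a choice of simple orderings of its rows and of its columns. Then (1) there exists a cyclic $s$-cycle decomposition of ${}^\lambda K_{(\frac{2ms}{\lambda t}+1)\times t}$, and (2) there exists a cyclic $k$-cycle decomposition of ${}^\lambda K_{(\frac{2nk}{\lambda t}+1)\times t}$.
   Context: Let $m,n,s,k,\lambda,t$ be positive integers with $t$ dividing $\frac{2nk}{\lambda}$, let $v=\frac{2nk}{\lambda}+t$ and let $J$ be the subgroup of $\mathbb{Z}_v$ of order $t$. A ${}^\lambda\mathrm{H}_t(m,n;s,k)$ is an $m\times n$ partially filled array with entries in $\mathbb{Z}_v$ such that: (a) each row has exactly $s$ and each column exactly $k$ filled cells; (b) the multiset $\{\pm x: x$ an entry of a filled cell$\}$ contains each element of $\mathbb{Z}_v\setminus J$ exactly $\lambda$ times and no element of $J$; (c) every row and column sums to $0$ in $\mathbb{Z}_v$. An ordering of a row/column (list of entries along a cyclic permutation of its filled cells) is simple if its partial sums are pairwise distinct; the array is simple if each row and column admits a simple ordering. $K_{q\times r}$ is the complete multipartite graph with $q$ parts of size $r$ and ${}^\lambda\Gamma$ is the multigraph obtained from $\Gamma$ by repeating each edge $\lambda$ times. A cyclic $\ell$-cycle decomposition of a multigraph with vertex set identified with $\mathbb{Z}_N$ is a set of $\ell$-cycles whose edge multisets partition the edge multiset, and which is closed under translation by every element of $\mathbb{Z}_N$. *)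

theory Defs
  imports Main "HOL-Library.Multiset"
begin

text \<open>A partially filled m x n array: A i j = None means the cell is empty.
  Only cells with i < m and j < n are considered. Entries of Z_v are represented
  by integers in {0..<v}.\<close>

definition row_cells :: "nat \<Rightarrow> (nat \<Rightarrow> nat \<Rightarrow> int option) \<Rightarrow> nat \<Rightarrow> nat set" where
  "row_cells n A i = {j. j < n \<and> A i j \<noteq> None}"

definition col_cells :: "nat \<Rightarrow> (nat \<Rightarrow> nat \<Rightarrow> int option) \<Rightarrow> nat \<Rightarrow> nat set" where
  "col_cells m A j = {i. i < m \<and> A i j \<noteq> None}"

definition filled_cells :: "nat \<Rightarrow> nat \<Rightarrow> (nat \<Rightarrow> nat \<Rightarrow> int option) \<Rightarrow> (nat \<times> nat) set" where
  "filled_cells m n A = {(i, j). i < m \<and> j < n \<and> A i j \<noteq> None}"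

definition subgrp_J :: "nat \<Rightarrow> nat \<Rightarrow> int set" where
  "subgrp_J v t = {y. 0 \<le> y \<and> y < int v \<and> int (v div t) dvd y}"

definition is_heffter :: "nat \<Rightarrow> nat \<Rightarrow> nat \<Rightarrow> nat \<Rightarrow> nat \<Rightarrow> nat \<Rightarrow> (nat \<Rightarrow> nat \<Rightarrow> int option) \<Rightarrow> bool" where
  "is_heffter lam t m n s k A \<longleftrightarrow>
    (let v = 2 * n * k div lam + t in
      (\<forall>(i, j) \<in> filled_cells m n A. 0 \<le> the (A i j) \<and> the (A i j) < int v) \<and>
      (\<forall>i < m. card (row_cells n A i) = s) \<and>
      (\<forall>j < n. card (col_cells m A j) = k) \<and>
      (\<forall>y. 0 \<le> y \<and> y < int v \<longrightarrow>
         card {(i, j) \<in> filled_cells m n A. the (A i j) mod int v = y}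
       + card {(i, j) \<in> filled_cells m n A. (- the (A i j)) mod int v = y}
         = (if y \<in> subgrp_J v t then 0 else lam)) \<and>
      (\<forall>i < m. (\<Sum>j \<in> row_cells n A i. the (A i j)) mod int v = 0) \<and>
      (\<forall>j < n. (\<Sum>i \<in> col_cells m A j. the (A i j)) mod int v = 0))"

definition simple_seq :: "nat \<Rightarrow> int list \<Rightarrow> bool" where
  "simple_seq v es \<longleftrightarrow> inj_on (\<lambda>h. sum_list (take h es) mod int v) {1..length es}"

definition is_simple_array :: "nat \<Rightarrow> nat \<Rightarrow> nat \<Rightarrow> nat \<Rightarrow> nat \<Rightarrow> (nat \<Rightarrow> nat \<Rightarrow> int option) \<Rightarrow> bool" where
  "is_simple_array lam t m n k A \<longleftrightarrow>
    (let v = 2 * n * k div lam + t in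
      (\<forall>i < m. \<exists>xs. distinct xs \<and> set xs = row_cells n A i \<and>
                     simple_seq v (map (\<lambda>j. the (A i j)) xs)) \<and>
      (\<forall>j < n. \<exists>xs. distinct xs \<and> set xs = col_cells m A j \<and>
                     simple_seq v (map (\<lambda>i. the (A i j)) xs)))"

definition cycle_edges :: "int list \<Rightarrow> int set multiset" where
  "cycle_edges xs = mset (map (\<lambda>h. {xs ! h, xs ! ((h + 1) mod length xs)}) [0..<length xs])"

text \<open>Edges of K_{q x r} on vertex set Z_{qr}; the parts are the cosets of the
  subgroup of order r, i.e. residue classes modulo q.\<close>
definition multipartite_edges :: "nat \<Rightarrow> nat \<Rightarrow> int set set" where
  "multipartite_edges q r = {{x, y} | x y. 0 \<le> x \<and> x < int (q * r) \<and> 0 \<le> y \<and> y < int (q * r)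
        \<and> x \<noteq> y \<and> \<not> int q dvd (x - y)}"

text \<open>D is a cyclic l-cycle decomposition of ^lambda K_{q x r} (vertices Z_{qr}).
  D is a collection (multiset) of l-cycles, each represented by its edge multiset.\<close>
definition cyclic_cycle_decomp :: "nat \<Rightarrow> nat \<Rightarrow> nat \<Rightarrow> nat \<Rightarrow> int set multiset multiset \<Rightarrow> bool" where
  "cyclic_cycle_decomp l lam q r D \<longleftrightarrow>
    (let N = q * r in
      (\<forall>C \<in># D. \<exists>xs. length xs = l \<and> distinct xs \<and> set xs \<subseteq> {0..<int N} \<and> C = cycle_edges xs) \<and>
      (\<forall>e. count (\<Sum>\<^sub># D) e = (if e \<in> multipartite_edges q r then lam else 0)) \<and>
      (\<forall>g \<in> {0..<int N}. image_mset (image_mset (image (\<lambda>x. (x + g) mod int N))) D = D))"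

end

theory Submission
  imports Defs
begin

text \<open>Read a row of the array in its simple ordering \<open>(a\<^sub>1, \<dots>, a\<^sub>s)\<close>. Its partial sums
  \<open>0, a\<^sub>1, a\<^sub>1 + a\<^sub>2, \<dots>\<close> are pairwise distinct in \<open>\<int>\<^sub>v\<close> and the row sums to \<open>0\<close>, so they form an
  \<open>s\<close>-cycle whose edges have differences \<open>\<plusminus>a\<^sub>h\<close>. Among the \<open>v\<close> translates of such a cycle,
  an edge \<open>{x, y}\<close> occurs once for every occurrence of \<open>y - x\<close> in \<open>\<plusminus>a\<^sub>h\<close>. By the Heffter
  condition the differences of all rows together cover every element outside the subgroup \<open>J\<close>
  exactly \<open>\<lambda>\<close> times and never hit \<open>J\<close>; since \<open>x - y \<in> J\<close> says exactly that \<open>x\<close> and \<open>y\<close>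
  lie in the same part of \<open>K\<^bsub>q\<times>t\<^esub>\<close> (\<open>q = v/t\<close>), the translates of the row cycles form a cyclic
  decomposition of \<open>\<lambda>K\<^bsub>q\<times>t\<^esub>\<close>. Columns are the rows of the transposed array, and counting the
  filled cells by rows and by columns gives \<open>ms = nk\<close>, which identifies the two values of \<open>q\<close>.\<close>

lemma mod_add_eq_iff:
  fixes c g u :: int
  assumes "0 \<le> g" "g < int N" "0 \<le> u" "u < int N"
  shows "(c + g) mod int N = u \<longleftrightarrow> g = (u - c) mod int N"
proof -
  have "(c + g) mod int N = u \<longleftrightarrow> (c + g) mod int N = u mod int N"
    using assms by simp
  also have "\<dots> \<longleftrightarrow> g mod int N = (u - c) mod int N"
    by (simp add: mod_eq_dvd_iff algebra_simps)
  also have "\<dots> \<longleftrightarrow> g = (u - c) mod int N"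
    using assms by simp
  finally show ?thesis .
qed

lemma translated_edge_eq_iff:
  fixes a c g x y :: int
  assumes "0 \<le> g" "g < int N" "0 \<le> x" "x < int N" "0 \<le> y" "y < int N"
  shows "{(c + g) mod int N, (c + a + g) mod int N} = {x, y} \<longleftrightarrow>
    (g = (x - c) mod int N \<and> a mod int N = (y - x) mod int N) \<or>
    (g = (y - c) mod int N \<and> (- a) mod int N = (y - x) mod int N)"
proof -
  have shift: "(c + a + g) mod int N = w \<longleftrightarrow> a mod int N = (w - u) mod int N"
    if "(c + g) mod int N = u" "0 \<le> w" "w < int N" for u w
  proof -
    have "int N dvd c + g - u"
      using that(1) dvd_minus_mod by metis
    moreover have "c + a + g - w = (a + u - w) + (c + g - u)"
      by simp
    ultimately have "int N dvd c + a + g - w \<longleftrightarrow> int N dvd a - (w - u)"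
      by (metis dvd_add_left_iff diff_diff_eq2 add_diff_eq)
    then show ?thesis
      using that by (simp add: mod_eq_dvd_iff[symmetric])
  qed
  have neg: "a mod int N = (x - y) mod int N \<longleftrightarrow> (- a) mod int N = (y - x) mod int N"
    by (simp add: mod_eq_dvd_iff) (metis dvd_minus_iff minus_diff_eq diff_minus_eq_add add.commute)
  show ?thesis
    using mod_add_eq_iff[of g N x c] mod_add_eq_iff[of g N y c] assms
      shift[of x y] shift[of y x] neg
    by (auto simp: doubleton_eq_iff)
qed

lemma sum_translated_edge_indicator:
  fixes a c x y :: int
  assumes "0 \<le> x" "x < int N" "0 \<le> y" "y < int N" "x \<noteq> y"
  shows "(\<Sum>g\<in>{0..<int N}. if {(c + g) mod int N, (c + a + g) mod int N} = {x, y} then 1 else 0) =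
    (if a mod int N = (y - x) mod int N then 1 else 0) +
    (if (- a) mod int N = (y - x) mod int N then 1 else (0::nat))"
proof -
  let ?P = "\<lambda>g. g = (x - c) mod int N \<and> a mod int N = (y - x) mod int N"
  let ?Q = "\<lambda>g. g = (y - c) mod int N \<and> (- a) mod int N = (y - x) mod int N"
  have "(x - c) mod int N \<noteq> (y - c) mod int N"
  proof
    assume "(x - c) mod int N = (y - c) mod int N"
    then have "x mod int N = y mod int N"
      by (simp add: mod_eq_dvd_iff)
    with assms show False
      by simp
  qed
  then have "(\<Sum>g\<in>{0..<int N}. if {(c + g) mod int N, (c + a + g) mod int N} = {x, y} then 1 else 0)
      = (\<Sum>g\<in>{0..<int N}. (if ?P g then 1 else 0) + (if ?Q g then 1 else (0::nat)))"
    using assms by (intro sum.cong refl) (auto simp: translated_edge_eq_iff)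
  also have "\<dots> = (if a mod int N = (y - x) mod int N then 1 else 0) +
      (if (- a) mod int N = (y - x) mod int N then 1 else 0)"
  proof -
    have single: "(\<Sum>g\<in>{0..<int N}. if g = z mod int N \<and> \<beta> then 1 else (0::nat)) =
        (if \<beta> then 1 else 0)" for z \<beta>
      using assms by (cases \<beta>) simp_all
    show ?thesis
      by (simp only: sum.distrib single)
  qed
  finally show ?thesis .
qed

lemma image_mset_sum: "image_mset f (sum F A) = (\<Sum>a\<in>A. image_mset f (F a))"
  using sum_comp_morphism[of "image_mset f" F A] by (simp add: o_def)

lemma sum_mset_sum: "\<Sum>\<^sub># (sum F A) = (\<Sum>a\<in>A. \<Sum>\<^sub># (F a))"
  using sum_comp_morphism[of sum_mset F A] by (simp add: o_def)

lemma cycle_edges_map: "cycle_edges (map f xs) = image_mset (image f) (cycle_edges xs)"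
proof -
  have "Suc h mod length xs < length xs" if "h < length xs" for h
    using that by (intro mod_less_divisor) auto
  then show ?thesis
    unfolding cycle_edges_def by (auto simp: multiset.map_comp o_def intro!: image_mset_cong)
qed

lemma count_cycle_edges:
  "count (cycle_edges xs) e =
    (\<Sum>h<length xs. if {xs ! h, xs ! (Suc h mod length xs)} = e then 1 else 0)"
proof -
  have "count (mset (map F [0..<l])) e = (\<Sum>h<l. if F h = e then 1 else 0)"
    for F :: "nat \<Rightarrow> int set" and l
    by (induction l) auto
  then show ?thesis
    unfolding cycle_edges_def by simp
qed

definition translate_list :: "nat \<Rightarrow> int \<Rightarrow> int list \<Rightarrow> int list" where
  "translate_list N g xs = map (\<lambda>x. (x + g) mod int N) xs"

lemma length_translate_list [simp]: "length (translate_list N g xs) = length xs"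
  by (simp add: translate_list_def)

lemma set_translate_list: "N > 0 \<Longrightarrow> set (translate_list N g xs) \<subseteq> {0..<int N}"
  by (auto simp: translate_list_def)

lemma distinct_translate_list:
  assumes "distinct xs" "set xs \<subseteq> {0..<int N}"
  shows "distinct (translate_list N g xs)"
proof -
  have "inj_on (\<lambda>x. (x + g) mod int N) {0..<int N}"
  proof
    fix x y assume range: "x \<in> {0..<int N}" "y \<in> {0..<int N}"
      and "(x + g) mod int N = (y + g) mod int N"
    then have "x mod int N = y mod int N"
      by (metis add_diff_cancel_right' mod_diff_left_eq)
    with range show "x = y"
      by simp
  qed
  then show ?thesis
    using assms unfolding translate_list_def by (simp add: distinct_map inj_on_subset)
qed

definition translation_orbit :: "nat \<Rightarrow> int list \<Rightarrow> int set multiset multiset" where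
  "translation_orbit N xs = (\<Sum>g\<in>{0..<int N}. {# cycle_edges (translate_list N g xs) #})"

lemma translation_orbit_invariant:
  assumes "N > 0"
  shows "image_mset (image_mset (image (\<lambda>x. (x + h) mod int N))) (translation_orbit N xs) =
    translation_orbit N xs"
proof -
  have bij: "bij_betw (\<lambda>g. (g + h) mod int N) {0..<int N} {0..<int N}"
    by (rule bij_betw_byWitness[where f'="\<lambda>g. (g - h) mod int N"])
      (use assms in \<open>auto simp: mod_simps\<close>)
  have "map (\<lambda>x. (x + h) mod int N) (translate_list N g xs) =
      translate_list N ((g + h) mod int N) xs" for g
    unfolding translate_list_def by (simp add: mod_simps add.assoc)
  then have "image_mset (image_mset (image (\<lambda>x. (x + h) mod int N))) (translation_orbit N xs) =
      (\<Sum>g\<in>{0..<int N}. {# cycle_edges (translate_list N ((g + h) mod int N) xs) #})"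
    unfolding translation_orbit_def by (simp add: image_mset_sum cycle_edges_map[symmetric])
  also have "\<dots> = translation_orbit N xs"
    unfolding translation_orbit_def using sum.reindex_bij_betw[OF bij] by simp
  finally show ?thesis .
qed

definition partial_sum_cycle :: "nat \<Rightarrow> int list \<Rightarrow> int list" where
  "partial_sum_cycle N es = map (\<lambda>h. sum_list (take h es) mod int N) [0..<length es]"

lemma length_partial_sum_cycle [simp]: "length (partial_sum_cycle N es) = length es"
  by (simp add: partial_sum_cycle_def)

lemma set_partial_sum_cycle: "N > 0 \<Longrightarrow> set (partial_sum_cycle N es) \<subseteq> {0..<int N}"
  by (auto simp: partial_sum_cycle_def)

lemma partial_sum_cycle_nth_Suc_mod:
  assumes "sum_list es mod int N = 0" "h < length es"
  shows "partial_sum_cycle N es ! (Suc h mod length es) = (sum_list (take h es) + es ! h) mod int N"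
proof -
  have take_Suc: "sum_list (take (Suc h) es) = sum_list (take h es) + es ! h"
    using assms(2) by (simp add: take_Suc_conv_app_nth)
  show ?thesis
  proof (cases "Suc h < length es")
    case True
    then show ?thesis
      using take_Suc by (simp add: partial_sum_cycle_def)
  next
    case False
    then have "length es = Suc h"
      using assms(2) by simp
    then show ?thesis
      using assms(1) take_Suc by (simp add: partial_sum_cycle_def del: upt_Suc)
  qed
qed

lemma distinct_partial_sum_cycle:
  assumes "simple_seq N es" "sum_list es mod int N = 0"
  shows "distinct (partial_sum_cycle N es)"
proof -
  let ?l = "length es"
  let ?f = "\<lambda>h. sum_list (take h es) mod int N"
  \<comment> \<open>\<open>s\<^sub>0 = s\<^sub>l\<close>: the vertices are the partial sums \<open>s\<^sub>1, \<dots>, s\<^sub>l\<close> that simplicity separates\<close>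
  let ?\<sigma> = "\<lambda>h. if h = 0 then ?l else h"
  have "inj_on ?f {1..?l}"
    using assms(1) by (simp add: simple_seq_def)
  moreover have "inj_on ?\<sigma> {0..<?l}" "?\<sigma> ` {0..<?l} \<subseteq> {1..?l}"
    by (auto simp: inj_on_def Suc_le_eq)
  ultimately have "inj_on (?f \<circ> ?\<sigma>) {0..<?l}"
    by (blast intro: comp_inj_on inj_on_subset)
  moreover have "?f \<circ> ?\<sigma> = ?f"
    using assms(2) by (auto simp: fun_eq_iff)
  ultimately show ?thesis
    by (simp add: partial_sum_cycle_def distinct_map)
qed

lemma count_translation_orbit_partial_sum_cycle:
  assumes "sum_list es mod int N = 0"
  shows "count (\<Sum>\<^sub># (translation_orbit N (partial_sum_cycle N es))) e =
    (\<Sum>h<length es. \<Sum>g\<in>{0..<int N}.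
      if {(sum_list (take h es) + g) mod int N, (sum_list (take h es) + es ! h + g) mod int N} = e
      then 1 else 0)"
proof -
  let ?xs = "partial_sum_cycle N es"
  have edge: "{translate_list N g ?xs ! h, translate_list N g ?xs ! (Suc h mod length es)} =
      {(sum_list (take h es) + g) mod int N, (sum_list (take h es) + es ! h + g) mod int N}"
    if "h < length es" for g h
  proof -
    have "Suc h mod length es < length es"
      using that by (intro mod_less_divisor) auto
    then have "translate_list N g ?xs ! (Suc h mod length es) =
        (?xs ! (Suc h mod length es) + g) mod int N"
      by (simp add: translate_list_def)
    also have "\<dots> = (sum_list (take h es) + es ! h + g) mod int N"
      using partial_sum_cycle_nth_Suc_mod[OF assms that] by (simp add: mod_simps)
    finally show ?thesis
      using that by (simp add: translate_list_def partial_sum_cycle_def mod_simps)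
  qed
  have "count (\<Sum>\<^sub># (translation_orbit N ?xs)) e =
      (\<Sum>g\<in>{0..<int N}. count (cycle_edges (translate_list N g ?xs)) e)"
    by (simp add: translation_orbit_def sum_mset_sum count_sum)
  also have "\<dots> = (\<Sum>g\<in>{0..<int N}. \<Sum>h<length es.
      if {(sum_list (take h es) + g) mod int N, (sum_list (take h es) + es ! h + g) mod int N} = e
      then 1 else 0)"
    unfolding count_cycle_edges length_translate_list length_partial_sum_cycle
    by (intro sum.cong refl) (simp add: edge)
  also have "\<dots> = (\<Sum>h<length es. \<Sum>g\<in>{0..<int N}.
      if {(sum_list (take h es) + g) mod int N, (sum_list (take h es) + es ! h + g) mod int N} = e
      then 1 else 0)"
    by (rule sum.swap)
  finally show ?thesis .
qed

text \<open>The multiplicity of \<open>d\<close> in the list \<open>\<plusminus>es\<close> reduced modulo \<open>N\<close>, i.e. among the differences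
  of the partial-sum cycle.\<close>

definition pm_count :: "nat \<Rightarrow> int list \<Rightarrow> int \<Rightarrow> nat" where
  "pm_count N es d =
    (\<Sum>a\<leftarrow>es. (if a mod int N = d then 1 else 0) + (if (- a) mod int N = d then 1 else 0))"

lemma pm_count_map_distinct:
  assumes "distinct xs"
  shows "pm_count N (map f xs) d =
    card {x \<in> set xs. f x mod int N = d} + card {x \<in> set xs. (- f x) mod int N = d}"
proof -
  have card_filter: "card {x \<in> set xs. P x} = (\<Sum>x\<in>set xs. if P x then 1 else 0)" for P
    by (simp add: sum.inter_filter[symmetric])
  have "pm_count N (map f xs) d =
      (\<Sum>x\<in>set xs. (if f x mod int N = d then 1 else 0) + (if (- f x) mod int N = d then 1 else 0))"
    unfolding pm_count_def map_map o_def using assms by (rule sum_list_distinct_conv_sum_set)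
  then show ?thesis
    by (simp only: sum.distrib card_filter)
qed

lemma count_translation_orbit_edge:
  assumes "sum_list es mod int N = 0" "0 \<le> x" "x < int N" "0 \<le> y" "y < int N" "x \<noteq> y"
  shows "count (\<Sum>\<^sub># (translation_orbit N (partial_sum_cycle N es))) {x, y} =
    pm_count N es ((y - x) mod int N)"
proof -
  have "count (\<Sum>\<^sub># (translation_orbit N (partial_sum_cycle N es))) {x, y} =
      (\<Sum>h<length es. (if es ! h mod int N = (y - x) mod int N then 1 else 0) +
        (if (- (es ! h)) mod int N = (y - x) mod int N then 1 else 0))"
    using assms
    by (simp add: count_translation_orbit_partial_sum_cycle sum_translated_edge_indicator)
  also have "\<dots> = pm_count N es ((y - x) mod int N)"
    unfolding pm_count_def sum_list_sum_nth by (simp add: atLeast0LessThan)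
  finally show ?thesis .
qed

lemma count_translation_orbit_non_edge:
  assumes "sum_list es mod int N = 0" "\<forall>a\<in>set es. a mod int N \<noteq> 0"
    and "\<nexists>x y. e = {x, y} \<and> 0 \<le> x \<and> x < int N \<and> 0 \<le> y \<and> y < int N \<and> x \<noteq> y"
  shows "count (\<Sum>\<^sub># (translation_orbit N (partial_sum_cycle N es))) e = 0"
proof -
  have "{(sum_list (take h es) + g) mod int N, (sum_list (take h es) + es ! h + g) mod int N} \<noteq> e"
    if "h < length es" "g \<in> {0..<int N}" for h g
  proof -
    have "(sum_list (take h es) + g) mod int N \<noteq> (sum_list (take h es) + es ! h + g) mod int N"
    proof
      assume "(sum_list (take h es) + g) mod int N = (sum_list (take h es) + es ! h + g) mod int N"
      then have "es ! h mod int N = 0"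
        by (simp add: mod_eq_dvd_iff)
      with assms(2) that(1) show False
        by simp
    qed
    with assms(3) that(2) show ?thesis
      by auto
  qed
  then show ?thesis
    by (simp add: count_translation_orbit_partial_sum_cycle[OF assms(1)])
qed

lemma doubleton_mem_multipartite_edges_iff:
  assumes "0 \<le> x" "x < int (q * r)" "0 \<le> y" "y < int (q * r)" "x \<noteq> y"
  shows "{x, y} \<in> multipartite_edges q r \<longleftrightarrow> \<not> int q dvd y - x"
  using assms by (auto simp: multipartite_edges_def doubleton_eq_iff dvd_diff_commute)

theorem cyclic_cycle_decomp_of_difference_family:
  fixes es :: "'i \<Rightarrow> int list"
  assumes N: "N = q * r" "N > 0" and "finite I"
    and len: "\<And>i. i \<in> I \<Longrightarrow> length (es i) = l"
    and simple: "\<And>i. i \<in> I \<Longrightarrow> simple_seq N (es i)"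
    and closed: "\<And>i. i \<in> I \<Longrightarrow> sum_list (es i) mod int N = 0"
    and diffs: "\<And>d. 0 \<le> d \<Longrightarrow> d < int N \<Longrightarrow>
      (\<Sum>i\<in>I. pm_count N (es i) d) = (if int q dvd d then 0 else lam)"
  shows "\<exists>D. cyclic_cycle_decomp l lam q r D"
proof -
  define D where "D = (\<Sum>i\<in>I. translation_orbit N (partial_sum_cycle N (es i)))"
  have nonzero: "\<forall>a\<in>set (es i). a mod int N \<noteq> 0" if "i \<in> I" for i
  proof -
    have "(\<Sum>i\<in>I. pm_count N (es i) 0) = 0"
      using diffs[of 0] N(2) by simp
    then have "pm_count N (es i) 0 = 0"
      using \<open>finite I\<close> that by simp
    then show ?thesis
      by (auto simp: pm_count_def sum_list_eq_0_iff)
  qed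
  have cycles: "\<exists>xs. length xs = l \<and> distinct xs \<and> set xs \<subseteq> {0..<int N} \<and> C = cycle_edges xs"
    if mem: "C \<in># D" for C
  proof -
    obtain i g where "i \<in> I" and "C = cycle_edges (translate_list N g (partial_sum_cycle N (es i)))"
      using mem \<open>finite I\<close> by (auto simp: D_def translation_orbit_def set_mset_sum)
    then show ?thesis
      using len simple closed N(2) set_partial_sum_cycle set_translate_list
      by (intro exI[of _ "translate_list N g (partial_sum_cycle N (es i))"])
        (simp add: distinct_translate_list distinct_partial_sum_cycle)
  qed
  have count: "count (\<Sum>\<^sub># D) e = (if e \<in> multipartite_edges q r then lam else 0)" for e
  proof (cases "\<exists>x y. e = {x, y} \<and> 0 \<le> x \<and> x < int N \<and> 0 \<le> y \<and> y < int N \<and> x \<noteq> y")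
    case True
    then obtain x y where e: "e = {x, y}" and xy: "0 \<le> x" "x < int N" "0 \<le> y" "y < int N" "x \<noteq> y"
      by blast
    have "count (\<Sum>\<^sub># D) e = (\<Sum>i\<in>I. pm_count N (es i) ((y - x) mod int N))"
      by (simp add: D_def e sum_mset_sum count_sum count_translation_orbit_edge closed xy)
    also have "\<dots> = (if int q dvd (y - x) mod int N then 0 else lam)"
      using N(2) by (intro diffs) simp_all
    also have "int q dvd (y - x) mod int N \<longleftrightarrow> int q dvd y - x"
      using N(1) by (simp add: dvd_mod_iff)
    finally show ?thesis
      using xy N(1) by (simp add: e doubleton_mem_multipartite_edges_iff)
  next
    case False
    then have "count (\<Sum>\<^sub># D) e = 0"
      by (simp add: D_def sum_mset_sum count_sum count_translation_orbit_non_edge closed nonzero)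
    moreover have "e \<notin> multipartite_edges q r"
      using False N(1) by (auto simp: multipartite_edges_def)
    ultimately show ?thesis
      by simp
  qed
  have invariant: "image_mset (image_mset (image (\<lambda>x. (x + g) mod int N))) D = D" for g
    by (simp add: D_def image_mset_sum translation_orbit_invariant N(2))
  show ?thesis
    unfolding cyclic_cycle_decomp_def Let_def N(1)[symmetric] using cycles count invariant by blast
qed

lemma card_filled_cells_filter:
  "card {(i, j) \<in> filled_cells m n A. P (the (A i j))} =
    (\<Sum>i<m. card {j \<in> row_cells n A i. P (the (A i j))})"
proof -
  have "{(i, j) \<in> filled_cells m n A. P (the (A i j))} =
      Sigma {..<m} (\<lambda>i. {j \<in> row_cells n A i. P (the (A i j))})"
    by (auto simp: filled_cells_def row_cells_def)
  then show ?thesis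
    by (simp add: card_SigmaI row_cells_def)
qed

text \<open>A named constant rather than \<open>\<lambda>j i. A i j\<close>: by eta-expansion that pattern matches every
  array, so rewrite rules stated with it loop.\<close>

definition transpose_array :: "(nat \<Rightarrow> nat \<Rightarrow> 'a) \<Rightarrow> nat \<Rightarrow> nat \<Rightarrow> 'a" where
  "transpose_array A j i = A i j"

lemma row_cells_transpose_array [simp]: "row_cells m (transpose_array A) j = col_cells m A j"
  by (simp add: row_cells_def col_cells_def transpose_array_def)

lemma col_cells_transpose_array [simp]: "col_cells n (transpose_array A) i = row_cells n A i"
  by (simp add: row_cells_def col_cells_def transpose_array_def)

lemma card_filled_cells_transpose_array:
  "card {(j, i) \<in> filled_cells n m (transpose_array A). P i j} =
    card {(i, j) \<in> filled_cells m n A. P i j}"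
proof -
  have swap: "{(j, i) \<in> filled_cells n m (transpose_array A). P i j} =
      prod.swap ` {(i, j) \<in> filled_cells m n A. P i j}"
    by (auto simp: filled_cells_def transpose_array_def)
  have "inj_on prod.swap X" for X :: "(nat \<times> nat) set"
    by (rule inj_onI) auto
  then show ?thesis
    unfolding swap by (rule card_image)
qed

lemma is_heffter_card_eq:
  assumes "is_heffter lam t m n s k A"
  shows "m * s = n * k"
proof -
  have "card (filled_cells m n A) = m * s"
    using assms card_filled_cells_filter[of m n A "\<lambda>_. True"] by (simp add: is_heffter_def Let_def)
  moreover have "card (filled_cells n m (transpose_array A)) = n * k"
    using assms card_filled_cells_filter[of n m "transpose_array A" "\<lambda>_. True"]
    by (simp add: is_heffter_def Let_def)
  moreover have "card (filled_cells n m (transpose_array A)) = card (filled_cells m n A)"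
    using card_filled_cells_transpose_array[of n m A "\<lambda>_ _. True"] by simp
  ultimately show ?thesis
    by simp
qed

lemma is_heffter_transpose_array:
  assumes "m * s = n * k" "is_heffter lam t m n s k A"
  shows "is_heffter lam t n m k s (transpose_array A)"
proof -
  define v where "v = 2 * n * k div lam + t"
  have v': "2 * m * s div lam + t = v"
    using assms(1) by (simp add: v_def mult.assoc)
  note heffter = assms(2)[unfolded is_heffter_def Let_def v_def[symmetric]]
  have "\<forall>(j, i)\<in>filled_cells n m (transpose_array A). 0 \<le> the (A i j) \<and> the (A i j) < int v"
    using heffter by (auto simp: filled_cells_def transpose_array_def)
  with heffter show ?thesis
    unfolding is_heffter_def Let_def v'
    by (simp add: transpose_array_def card_filled_cells_transpose_array)
qed

lemma is_simple_array_transpose_array: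
  assumes "m * s = n * k" "is_simple_array lam t m n k A"
  shows "is_simple_array lam t n m s (transpose_array A)"
proof -
  have v: "2 * m * s div lam + t = 2 * n * k div lam + t"
    using assms(1) by (simp add: mult.assoc)
  show ?thesis
    using assms(2) unfolding is_simple_array_def Let_def v
    by (simp add: transpose_array_def)
qed

lemma heffter_rows_cyclic_cycle_decomp:
  assumes "t > 0" "t dvd 2 * n * k div lam"
    and heffter: "is_heffter lam t m n s k A" and simple: "is_simple_array lam t m n k A"
  shows "\<exists>D. cyclic_cycle_decomp s lam (2 * n * k div (lam * t) + 1) t D"
proof -
  define v where "v = 2 * n * k div lam + t"
  define q where "q = 2 * n * k div (lam * t) + 1"
  have v: "v = q * t"
  proof -
    have "2 * n * k div (lam * t) * t = 2 * n * k div lam"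
      using assms(2) by (simp add: div_mult2_eq)
    then show ?thesis
      by (simp add: v_def q_def algebra_simps)
  qed
  note H = heffter[unfolded is_heffter_def Let_def v_def[symmetric]]
  obtain row where row: "\<And>i. i < m \<Longrightarrow>
      distinct (row i) \<and> set (row i) = row_cells n A i \<and>
      simple_seq v (map (\<lambda>j. the (A i j)) (row i))"
    using simple unfolding is_simple_array_def Let_def v_def[symmetric] by metis
  have J: "y \<in> subgrp_J v t \<longleftrightarrow> int q dvd y" if "0 \<le> y" "y < int v" for y
    using that v assms(1) by (simp add: subgrp_J_def)
  show ?thesis
    unfolding q_def[symmetric]
  proof (rule cyclic_cycle_decomp_of_difference_family
      [where N = v and I = "{..<m}" and es = "\<lambda>i. map (\<lambda>j. the (A i j)) (row i)"])
    show "v = q * t" "v > 0" "finite {..<m}"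
      using v assms(1) by (simp_all add: q_def)
  next
    fix i assume "i \<in> {..<m}"
    then show "length (map (\<lambda>j. the (A i j)) (row i)) = s"
      "simple_seq v (map (\<lambda>j. the (A i j)) (row i))"
      "sum_list (map (\<lambda>j. the (A i j)) (row i)) mod int v = 0"
      using row[of i] H by (auto simp: distinct_card[symmetric] sum_list_distinct_conv_sum_set)
  next
    fix d :: int assume d: "0 \<le> d" "d < int v"
    have "(\<Sum>i\<in>{..<m}. pm_count v (map (\<lambda>j. the (A i j)) (row i)) d) =
        (\<Sum>i<m. card {j \<in> row_cells n A i. the (A i j) mod int v = d} +
          card {j \<in> row_cells n A i. (- the (A i j)) mod int v = d})"
      using row by (simp add: pm_count_map_distinct)
    also have "\<dots> = card {(i, j) \<in> filled_cells m n A. the (A i j) mod int v = d} +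
        card {(i, j) \<in> filled_cells m n A. (- the (A i j)) mod int v = d}"
      by (simp add: sum.distrib card_filled_cells_filter[of m n A "\<lambda>a. a mod int v = d"]
          card_filled_cells_filter[of m n A "\<lambda>a. (- a) mod int v = d"])
    also have "\<dots> = (if int q dvd d then 0 else lam)"
      using H d J by simp
    finally show "(\<Sum>i\<in>{..<m}. pm_count v (map (\<lambda>j. the (A i j)) (row i)) d) =
        (if int q dvd d then 0 else lam)" .
  qed
qed

theorem proposition3:
  fixes m n s k lam t :: nat and A :: "nat \<Rightarrow> nat \<Rightarrow> int option"
  assumes "m > 0" "n > 0" "s > 0" "k > 0" "lam > 0" "t > 0"
    and "lam dvd 2 * n * k" and "t dvd 2 * n * k div lam"
    and "is_heffter lam t m n s k A"
    and "is_simple_array lam t m n k A"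
  shows "(\<exists>D. cyclic_cycle_decomp s lam (2 * m * s div (lam * t) + 1) t D) \<and>
         (\<exists>D. cyclic_cycle_decomp k lam (2 * n * k div (lam * t) + 1) t D)"
proof -
  have ms: "m * s = n * k"
    using assms(9) by (rule is_heffter_card_eq)
  then have v: "2 * m * s = 2 * n * k"
    by (simp add: mult.assoc)
  have "\<exists>D. cyclic_cycle_decomp s lam (2 * n * k div (lam * t) + 1) t D"
    using assms(6,8-10) by (rule heffter_rows_cyclic_cycle_decomp)
  moreover have "\<exists>D. cyclic_cycle_decomp k lam (2 * m * s div (lam * t) + 1) t D"
    using assms(6) assms(8)[folded v] is_heffter_transpose_array[OF ms assms(9)]
      is_simple_array_transpose_array[OF ms assms(10)]
    by (rule heffter_rows_cyclic_cycle_decomp)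
  ultimately show ?thesis
    unfolding v by blast
qed

end
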